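(* Let $P$ be a discrete Dubins path, let $e=ab$ be an inflection edge of $P$ (traversed from $a$ to $b$) and let $bc$ be the edge of $P$ following $e$. Call a vector $T$ admissible for $e$ if the ray from $b$ in direction $T$ points into the (open) side of the supporting line of $e$ on which $bc$ lies. For a vector $T$, let $P(T)$ be the path obtained from $P$ by rigidly translating the part of $P$ starting from $b$ by $T$ and replacing the edge $ab$ by the segment from $a$ to $b+T$. Then for every vector $T$ admissible for $e$ there exists $\varepsilon>0$ such that $P(\varepsilon T)$ is a discrete curvature-constrained path.
   Context: Fix an angle $\theta$ with $0\le\theta\le\pi/2$ such that $2\pi/\theta$ is an integer, and a length $\ell>0$. For a polygonal path, the turn at an internal vertex is the angle in $[0,\pi]$ between the direction of the incoming edge and the direction of the outgoing edge. An edge is short if its length is $<\ell$, normal if $=\ell$, long if $>\ell$. An edge $e$ with an adjacent edge at each end is an inflection edge if its two adjacent edges lie on opposite sides of the supporting line of $e$, and non-inflection otherwise. A discrete curvature-constrained path is a polygonal path such that: (i) the turn at every internal vertex is at most $\theta$; (ii) no two adjacent edges are both short; (iii) for every short non-inflection edge $ab$ with adjacent edges $a^-a$ and $bb^+$, the angle between the directions $\overrightarrow{a^-a}$ and $\overrightarrow{bb^+}$ is at most $\theta$. A configuration is a pair $(u,U)$ of a point $u$ and a vector $U$ of length $\ell$. A polygonal path $P$ with first vertex $u$ starts at $(u,U)$ if prepending the segment from $u-U$ to $u$ (the pre-edge) yields a discrete curvature-constrained path; $P$ with last vertex $v$ ends at $(v,V)$ if appending the segment from $v$ to $v+V$ (the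 post-edge) yields a discrete curvature-constrained path. A discrete Dubins path is a discrete curvature-constrained path of minimum length among all those starting at a given configuration $\mathcal U$ and ending at a given configuration $\mathcal V$. Standing assumption: paths make a non-zero turn at every internal vertex. *)

theory Defs
  imports "HOL-Analysis.Analysis"
begin

text \<open>The plane is modelled by the complex numbers. A polygonal path is the list of its
vertices; its edges join consecutive vertices.\<close>

definition vangle :: "complex \<Rightarrow> complex \<Rightarrow> real" where
  "vangle x y = arccos (inner x y / (norm x * norm y))"

definition cross2 :: "complex \<Rightarrow> complex \<Rightarrow> real" where
  "cross2 x y = Re x * Im y - Im x * Re y"

definition short_edge :: "real \<Rightarrow> complex \<Rightarrow> complex \<Rightarrow> bool" where
  "short_edge l a b \<longleftrightarrow> dist a b < l"

definition inflection :: "complex \<Rightarrow> complex \<Rightarrow> complex \<Rightarrow> complex \<Rightarrow> bool" where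
  "inflection p q r s \<longleftrightarrow> cross2 (r - q) (p - q) * cross2 (r - q) (s - q) < 0"

definition dcc :: "real \<Rightarrow> real \<Rightarrow> complex list \<Rightarrow> bool" where
  "dcc \<theta> l P \<longleftrightarrow>
     length P \<ge> 2 \<and>
     (\<forall>i. Suc i < length P \<longrightarrow> P ! i \<noteq> P ! Suc i) \<and>
     (\<forall>i. i + 2 < length P \<longrightarrow>
        vangle (P ! (i+1) - P ! i) (P ! (i+2) - P ! (i+1)) \<le> \<theta>) \<and>
     (\<forall>i. i + 2 < length P \<longrightarrow>
        \<not> (short_edge l (P ! i) (P ! (i+1)) \<and> short_edge l (P ! (i+1)) (P ! (i+2)))) \<and>
     (\<forall>j. j + 3 < length P \<longrightarrow> short_edge l (P ! (j+1)) (P ! (j+2)) \<longrightarrow>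
        \<not> inflection (P ! j) (P ! (j+1)) (P ! (j+2)) (P ! (j+3)) \<longrightarrow>
        vangle (P ! (j+1) - P ! j) (P ! (j+3) - P ! (j+2)) \<le> \<theta>)"

definition path_length :: "complex list \<Rightarrow> real" where
  "path_length P = (\<Sum>i < length P - 1. dist (P ! i) (P ! Suc i))"

definition starts_at :: "real \<Rightarrow> real \<Rightarrow> complex list \<Rightarrow> complex \<Rightarrow> complex \<Rightarrow> bool" where
  "starts_at \<theta> l P u U \<longleftrightarrow> P \<noteq> [] \<and> hd P = u \<and> dcc \<theta> l ((u - U) # P)"

definition ends_at :: "real \<Rightarrow> real \<Rightarrow> complex list \<Rightarrow> complex \<Rightarrow> complex \<Rightarrow> bool" where
  "ends_at \<theta> l P v V \<longleftrightarrow> P \<noteq> [] \<and> last P = v \<and> dcc \<theta> l (P @ [v + V])"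

definition dubins ::
  "real \<Rightarrow> real \<Rightarrow> complex \<Rightarrow> complex \<Rightarrow> complex \<Rightarrow> complex \<Rightarrow> complex list \<Rightarrow> bool" where
  "dubins \<theta> l u U v V P \<longleftrightarrow>
     norm U = l \<and> norm V = l \<and>
     dcc \<theta> l P \<and> starts_at \<theta> l P u U \<and> ends_at \<theta> l P v V \<and>
     (\<forall>Q. dcc \<theta> l Q \<and> starts_at \<theta> l Q u U \<and> ends_at \<theta> l Q v V \<longrightarrow>
          path_length P \<le> path_length Q)"

definition nonzero_turns :: "complex list \<Rightarrow> bool" where
  "nonzero_turns P \<longleftrightarrow>
     (\<forall>i. i + 2 < length P \<longrightarrow> vangle (P ! (i+1) - P ! i) (P ! (i+2) - P ! (i+1)) > 0)"

definition admissible :: "complex \<Rightarrow> complex \<Rightarrow> complex \<Rightarrow> complex \<Rightarrow> bool" where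
  "admissible a b c T \<longleftrightarrow> cross2 (b - a) T * cross2 (b - a) (c - b) > 0"

text \<open>P(T) for the edge from P!i to P!(i+1): translate vertices from index i+1 on by T.\<close>
definition translate_from :: "complex list \<Rightarrow> nat \<Rightarrow> complex \<Rightarrow> complex list" where
  "translate_from P i T = take (Suc i) P @ map (\<lambda>p. p + T) (drop (Suc i) P)"

end

theory Submission
  imports Defs
begin

text \<open>Translating the part of \<open>P\<close> after \<open>b\<close> by \<open>t T\<close> changes only the edge vector \<open>e = b - a\<close>, into
  \<open>e + t T\<close>. At an inflection edge both neighbouring edge vectors lie strictly on the same side of
  \<open>e\<close>, and so does \<open>T\<close>; tilting \<open>e\<close> towards that side therefore keeps \<open>e\<close> an inflection edge and, for
  small \<open>t\<close>, decreases its angle with the neighbouring edges and, since all turns are at most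
  \<open>pi / 2\<close>, also with the edges beyond a short neighbour. The only remaining danger is that \<open>e\<close>
  becomes short next to a short neighbour. This is excluded by minimality: if a neighbour of \<open>e\<close>
  were short, sliding the common vertex back along it would, by the same perturbation argument,
  give a shorter curvature-constrained path with the same pre- and post-edge.\<close>

section \<open>Sides and cross products\<close>

definition same_side :: "complex \<Rightarrow> complex \<Rightarrow> complex \<Rightarrow> bool" where
  "same_side x a b \<longleftrightarrow> 0 < cross2 x a * cross2 x b"

definition edge :: "complex list \<Rightarrow> nat \<Rightarrow> complex" where
  "edge R k = R ! Suc k - R ! k"

lemma cross2_add_right: "cross2 x (y + z) = cross2 x y + cross2 x z"
  by (simp add: cross2_def algebra_simps)

lemma cross2_scaleR_right: "cross2 x (c *\<^sub>R y) = c * cross2 x y"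
  and cross2_scaleR_left: "cross2 (c *\<^sub>R x) y = c * cross2 x y"
  by (simp_all add: cross2_def algebra_simps)

lemma cross2_commute: "cross2 y x = - cross2 x y"
  by (simp add: cross2_def)

lemma cross2_self [simp]: "cross2 x x = 0"
  by (simp add: cross2_def)

lemma inner_square_add_cross2_square: "inner x y ^ 2 + cross2 x y ^ 2 = norm x ^ 2 * norm y ^ 2"
  unfolding cmod_power2 by (simp add: cross2_def inner_complex_def power2_eq_square algebra_simps)

lemma same_side_commute: "same_side x a b \<longleftrightarrow> same_side x b a"
  by (simp add: same_side_def mult.commute)

lemma same_side_trans: "same_side x a b \<Longrightarrow> same_side x b c \<Longrightarrow> same_side x a c"
  by (auto simp: same_side_def zero_less_mult_iff)

lemma same_side_self: "same_side x a a \<longleftrightarrow> cross2 x a \<noteq> 0"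
  by (auto simp: same_side_def zero_less_mult_iff)

lemma same_side_scaleR:
  assumes "0 < a" "0 < b" "0 < c"
  shows "same_side (a *\<^sub>R x) (b *\<^sub>R y) (c *\<^sub>R z) \<longleftrightarrow> same_side x y z"
proof -
  have "cross2 (a *\<^sub>R x) (b *\<^sub>R y) * cross2 (a *\<^sub>R x) (c *\<^sub>R z) = (a * a * b * c) * (cross2 x y * cross2 x z)"
    by (simp add: cross2_scaleR_left cross2_scaleR_right)
  moreover have "0 < a * a * b * c"
    using assms by simp
  ultimately show ?thesis
    unfolding same_side_def using mult_less_cancel_left_pos[of "a * a * b * c" 0] by simp
qed

lemma same_side_change_axis:
  assumes "same_side a y b" "same_side c y b" "same_side b a c"
  shows "same_side y a c"
proof -
  have "cross2 a y * cross2 a b * (cross2 c y * cross2 c b) * (cross2 b a * cross2 b c) > 0"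
    using assms unfolding same_side_def by simp
  then have "cross2 a y * cross2 c y * (cross2 a b * cross2 b c) ^ 2 > 0"
    by (simp add: cross2_commute[of a b] cross2_commute[of c b] power2_eq_square algebra_simps)
  then show ?thesis
    by (simp add: same_side_def cross2_commute[of a y] cross2_commute[of c y] zero_less_mult_iff)
qed

lemma inflection_iff_same_side:
  "inflection p q r s \<longleftrightarrow> same_side (r - q) (q - p) (s - r)"
proof -
  have "cross2 (r - q) (p - q) = - cross2 (r - q) (q - p)"
    by (simp add: cross2_def algebra_simps)
  moreover have "cross2 (r - q) (s - q) = cross2 (r - q) (s - r)"
    by (simp add: cross2_def algebra_simps)
  ultimately show ?thesis
    by (simp add: inflection_def same_side_def)
qed

lemma admissible_iff_same_side: "admissible a b c T \<longleftrightarrow> same_side (b - a) T (c - b)"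
  by (simp add: admissible_def same_side_def mult.commute)

section \<open>Paths as sequences of edge vectors\<close>

lemma dcc_iff_edges:
  "dcc \<theta> l R \<longleftrightarrow>
     2 \<le> length R \<and>
     (\<forall>k. Suc k < length R \<longrightarrow> edge R k \<noteq> 0) \<and>
     (\<forall>k. Suc (Suc k) < length R \<longrightarrow> vangle (edge R k) (edge R (Suc k)) \<le> \<theta>) \<and>
     (\<forall>k. Suc (Suc k) < length R \<longrightarrow> \<not> (norm (edge R k) < l \<and> norm (edge R (Suc k)) < l)) \<and>
     (\<forall>k. Suc (Suc (Suc k)) < length R \<longrightarrow> norm (edge R (Suc k)) < l \<longrightarrow>
        \<not> same_side (edge R (Suc k)) (edge R k) (edge R (Suc (Suc k))) \<longrightarrow>
        vangle (edge R k) (edge R (Suc (Suc k))) \<le> \<theta>)"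
proof -
  have "R ! k \<noteq> R ! Suc k \<longleftrightarrow> edge R k \<noteq> 0" for k
    by (auto simp: edge_def)
  moreover have "short_edge l (R ! k) (R ! Suc k) \<longleftrightarrow> norm (edge R k) < l" for k
    by (simp add: short_edge_def edge_def dist_norm norm_minus_commute)
  ultimately show ?thesis
    unfolding dcc_def inflection_iff_same_side
    by (simp add: edge_def[symmetric] add.commute[of _ 1] add.commute[of _ 2] add.commute[of _ 3]
        numeral_2_eq_2 numeral_3_eq_3)
qed

lemma dccD:
  assumes "dcc \<theta> l R"
  shows "2 \<le> length R"
    and "Suc k < length R \<Longrightarrow> edge R k \<noteq> 0"
    and "Suc (Suc k) < length R \<Longrightarrow> vangle (edge R k) (edge R (Suc k)) \<le> \<theta>"
    and "Suc (Suc k) < length R \<Longrightarrow> norm (edge R k) < l \<Longrightarrow> \<not> norm (edge R (Suc k)) < l"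
    and "Suc (Suc (Suc k)) < length R \<Longrightarrow> norm (edge R (Suc k)) < l \<Longrightarrow>
      \<not> same_side (edge R (Suc k)) (edge R k) (edge R (Suc (Suc k))) \<Longrightarrow>
      vangle (edge R k) (edge R (Suc (Suc k))) \<le> \<theta>"
  using assms unfolding dcc_iff_edges by blast+

lemma path_length_edges: "path_length R = (\<Sum>k < length R - 1. norm (edge R k))"
  by (simp add: path_length_def edge_def dist_norm norm_minus_commute)

lemma edge_Cons_Suc [simp]: "edge (x # R) (Suc k) = edge R k"
  by (simp add: edge_def)

lemma edge_append_singleton: "Suc k < length R \<Longrightarrow> edge (R @ [y]) k = edge R k"
  by (simp add: edge_def nth_append)

lemma edge_list_update_add:
  assumes "Suc j < length P"
  shows "edge (P[k := P ! k + d]) j =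
    (if j = k then edge P j - d else if Suc j = k then edge P j + d else edge P j)"
  using assms by (auto simp: edge_def nth_list_update)

lemma nth_translate_from:
  "j < length P \<Longrightarrow> translate_from P i X ! j = (if j \<le> i then P ! j else P ! j + X)"
  by (auto simp: translate_from_def nth_append min_def)

lemma length_translate_from: "i < length P \<Longrightarrow> length (translate_from P i X) = length P"
  by (simp add: translate_from_def)

lemma edge_translate_from:
  "Suc k < length P \<Longrightarrow> edge (translate_from P i X) k = (if k = i then edge P k + X else edge P k)"
  by (auto simp: edge_def nth_translate_from)

section \<open>Angles under small tilts\<close>

lemma vangle_commute: "vangle x y = vangle y x"
  by (simp add: vangle_def inner_commute mult.commute)

lemma vangle_scaleR_left: "0 < c \<Longrightarrow> vangle (c *\<^sub>R x) y = vangle x y"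
  and vangle_scaleR_right: "0 < c \<Longrightarrow> vangle x (c *\<^sub>R y) = vangle x y"
  by (simp_all add: vangle_def field_simps)

lemma abs_inner_div_norms_le_1: "\<bar>inner x y / (norm x * norm y)\<bar> \<le> 1"
  by (cases "x = 0 \<or> y = 0") (auto simp: abs_mult Cauchy_Schwarz_ineq2 divide_le_eq_1)

lemma inner_nonneg_if_vangle_le_pi_half:
  assumes "vangle x y \<le> pi / 2"
  shows "0 \<le> inner x y"
proof (rule ccontr)
  assume "\<not> 0 \<le> inner x y"
  then have "inner x y / (norm x * norm y) < 0"
    by (cases "x = 0 \<or> y = 0") (auto intro: divide_neg_pos)
  then have "arccos 0 < vangle x y"
    using abs_inner_div_norms_le_1[of x y] unfolding vangle_def abs_le_iff
    by (intro arccos_less_arccos) auto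
  with assms show False
    by simp
qed

lemma norm_le_norm_add_scaleR:
  assumes "0 \<le> inner y z" "0 \<le> t"
  shows "norm y \<le> norm (y + t *\<^sub>R z)"
proof -
  have "norm y ^ 2 \<le> norm y ^ 2 + 2 * t * inner y z + t ^ 2 * norm z ^ 2"
    using assms by simp
  also have "\<dots> = norm (y + t *\<^sub>R z) ^ 2"
    unfolding power2_norm_eq_inner
    by (simp add: inner_commute[of z y] power2_eq_square algebra_simps)
  finally show ?thesis
    by (rule power2_le_imp_le) simp
qed

lemma norm_add_less_if_cross2_nonzero:
  assumes "cross2 x y \<noteq> 0"
  shows "norm (x + y) < norm x + norm y"
proof -
  have "x \<noteq> 0"
    using assms by (auto simp: cross2_def)
  moreover have "norm x *\<^sub>R y \<noteq> norm y *\<^sub>R x"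
  proof
    assume "norm x *\<^sub>R y = norm y *\<^sub>R x"
    then have "norm x * cross2 x y = 0"
      by (metis cross2_scaleR_right cross2_self mult_zero_right)
    with assms \<open>x \<noteq> 0\<close> show False
      by simp
  qed
  ultimately show ?thesis
    using norm_triangle_eq[of x y] norm_triangle_ineq[of x y] by linarith
qed

lemma same_side_of_non_inflection:
  assumes "x1 \<noteq> 0" "x2 \<noteq> 0" "cross2 x0 x1 \<noteq> 0"
    and "0 \<le> inner x0 x1" "0 \<le> inner x1 x2" "0 \<le> inner x0 x2"
    and "\<not> same_side x1 x0 x2"
  shows "same_side x0 x1 x2"
proof -
  define s where "s = cross2 x0 x1"
  have turn: "0 \<le> s * cross2 x1 x2"
    using assms(7) by (simp add: same_side_def s_def cross2_commute[of x1 x0])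
  have cross_identity: "s * cross2 x0 x2 * norm x1 ^ 2 = inner x1 x2 * s ^ 2 + s * cross2 x1 x2 * inner x0 x1"
    unfolding s_def cmod_power2
    by (simp add: cross2_def inner_complex_def power2_eq_square algebra_simps)
  have inner_identity: "inner x0 x2 * norm x1 ^ 2 = inner x0 x1 * inner x1 x2 - s * cross2 x1 x2"
    unfolding s_def cmod_power2
    by (simp add: cross2_def inner_complex_def power2_eq_square algebra_simps)
  have "0 < s * cross2 x0 x2 * norm x1 ^ 2"
  proof (rule ccontr)
    assume "\<not> ?thesis"
    then have "inner x1 x2 * s ^ 2 = 0" "s * cross2 x1 x2 * inner x0 x1 = 0"
      using cross_identity turn assms(4,5) by (smt (verit) mult_nonneg_nonneg zero_le_power2)+
    then have "inner x1 x2 = 0"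
      using assms(3) by (simp add: s_def)
    then have "cross2 x1 x2 \<noteq> 0"
      using inner_square_add_cross2_square[of x1 x2] assms(1,2) by auto
    then have "inner x0 x1 = 0" "0 < s * cross2 x1 x2"
      using \<open>s * cross2 x1 x2 * inner x0 x1 = 0\<close> turn assms(3) by (auto simp: s_def less_le)
    then have "inner x0 x2 * norm x1 ^ 2 < 0"
      using inner_identity by simp
    with assms(6) show False
      by (simp add: mult_less_0_iff)
  qed
  then show ?thesis
    by (simp add: same_side_def s_def zero_less_mult_iff)
qed

lemma eventually_add_scaleR_nonzero:
  fixes y z :: complex
  assumes "y \<noteq> 0"
  shows "\<forall>\<^sub>F t in at_right 0. y + t *\<^sub>R z \<noteq> 0"
proof -
  have "((\<lambda>t. y + t *\<^sub>R z) \<longlongrightarrow> y + 0 *\<^sub>R z) (at_right (0::real))"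
    by (intro tendsto_intros)
  with assms show ?thesis
    using tendsto_imp_eventually_ne by fastforce
qed

lemma eventually_same_side_tilt:
  assumes "cross2 x y \<noteq> 0"
  shows "\<forall>\<^sub>F t in at_right 0. same_side x (y + t *\<^sub>R z) y"
proof -
  have "((\<lambda>t. cross2 x (y + t *\<^sub>R z) * cross2 x y) \<longlongrightarrow> (cross2 x y + 0 * cross2 x z) * cross2 x y)
      (at_right (0::real))"
    unfolding cross2_add_right cross2_scaleR_right by (intro tendsto_intros)
  moreover have "0 < (cross2 x y + 0 * cross2 x z) * cross2 x y"
    using assms by (auto simp: zero_less_mult_iff)
  ultimately show ?thesis
    unfolding same_side_def by (rule order_tendstoD)
qed

lemma has_real_derivative_norm_add_scaleR:
  assumes "y \<noteq> 0"
  shows "((\<lambda>t. norm (y + t *\<^sub>R z)) has_real_derivative inner (sgn y) z) (at 0)"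
proof -
  have line: "((\<lambda>t. y + t *\<^sub>R z) has_derivative (\<lambda>h. h *\<^sub>R z)) (at (0::real))"
    by (auto intro!: derivative_eq_intros)
  have "(norm has_derivative (\<lambda>h. inner h (sgn y))) (at (y + 0 *\<^sub>R z))"
    using has_derivative_norm[of y] assms by simp
  from has_derivative_compose[OF line this]
  have "((\<lambda>t. norm (y + t *\<^sub>R z)) has_derivative (\<lambda>h. inner (h *\<^sub>R z) (sgn y))) (at 0)"
    by (simp add: o_def)
  moreover have "(\<lambda>h. inner (h *\<^sub>R z) (sgn y)) = (*) (inner (sgn y) z)"
    by (auto simp: inner_commute)
  ultimately show ?thesis
    by (simp add: has_field_derivative_def)
qed

text \<open>Tilting \<open>y\<close> towards the side of \<open>x\<close> increases the cosine of the angle with \<open>x\<close>: the numerator of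
  the difference of the two cosines has the positive derivative
  \<open>cross2 y x * cross2 y z / norm y\<close> at \<open>t = 0\<close>.\<close>
lemma eventually_vangle_tilt_le:
  assumes x: "x \<noteq> 0" and y: "y \<noteq> 0" and side: "same_side y x z"
  shows "\<forall>\<^sub>F t in at_right 0. vangle x (y + t *\<^sub>R z) \<le> vangle x y"
proof -
  define h where "h t = inner x (y + t *\<^sub>R z) * norm y - inner x y * norm (y + t *\<^sub>R z)" for t
  have "(h has_real_derivative (inner x z * norm y - inner x y * inner (sgn y) z)) (at 0)"
    unfolding h_def
    by (rule derivative_eq_intros has_real_derivative_norm_add_scaleR[OF y]
        | simp add: inner_add_right)+
  moreover have "inner x z * norm y - inner x y * inner (sgn y) z = cross2 y x * cross2 y z / norm y"
  proof -
    have "norm y ^ 2 * inner x z - inner x y * inner y z = cross2 y x * cross2 y z"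
      unfolding cmod_power2 by (simp add: cross2_def inner_complex_def power2_eq_square algebra_simps)
    with y show ?thesis
      by (simp add: sgn_div_norm field_simps power2_eq_square)
  qed
  moreover have "0 < cross2 y x * cross2 y z / norm y"
    using side y by (simp add: same_side_def)
  ultimately obtain d where "0 < d" "\<And>t. 0 < t \<Longrightarrow> t < d \<Longrightarrow> h 0 < h (0 + t)"
    using DERIV_pos_inc_right by metis
  then have "\<forall>\<^sub>F t in at_right 0. h 0 < h t"
    unfolding eventually_at_right_field by auto
  moreover have "\<forall>\<^sub>F t in at_right 0. y + t *\<^sub>R z \<noteq> 0"
    using y by (rule eventually_add_scaleR_nonzero)
  ultimately show ?thesis
  proof eventually_elim
    case (elim t)
    then have "inner x y / (norm x * norm y) < inner x (y + t *\<^sub>R z) / (norm x * norm (y + t *\<^sub>R z))"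
      using x y by (simp add: h_def field_simps)
    then show ?case
      using abs_inner_div_norms_le_1[of x y] abs_inner_div_norms_le_1[of x "y + t *\<^sub>R z"]
      unfolding vangle_def abs_le_iff by (intro arccos_le_arccos) auto
  qed
qed

lemma eventually_vangle_tilt_le_finite:
  assumes "finite A" "\<And>j. j \<in> A \<Longrightarrow> x j \<noteq> 0" "y \<noteq> 0"
  shows "\<forall>\<^sub>F t in at_right 0. \<forall>j \<in> A. same_side y (x j) z \<longrightarrow> vangle (x j) (y + t *\<^sub>R z) \<le> vangle (x j) y"
proof (intro eventually_ball_finite ballI)
  fix j
  assume j: "j \<in> A"
  show "\<forall>\<^sub>F t in at_right 0. same_side y (x j) z \<longrightarrow> vangle (x j) (y + t *\<^sub>R z) \<le> vangle (x j) y"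
  proof (cases "same_side y (x j) z")
    case True
    with j assms have "\<forall>\<^sub>F t in at_right 0. vangle (x j) (y + t *\<^sub>R z) \<le> vangle (x j) y"
      by (intro eventually_vangle_tilt_le) auto
    then show ?thesis
      by (rule eventually_mono) simp
  qed simp
qed (use assms in simp)

section \<open>Tilting an inflection edge\<close>

text \<open>This covers both the translation of the theorem and the vertex slides of the minimality argument.
  Other edges may shrink only if they are already short, so that no edge becomes newly short.\<close>
definition perturbs_edge :: "real \<Rightarrow> nat \<Rightarrow> complex \<Rightarrow> complex list \<Rightarrow> complex list \<Rightarrow> bool" where
  "perturbs_edge l m w R R' \<longleftrightarrow> length R' = length R \<and> edge R' m = edge R m + w \<and>
     (\<exists>c. \<forall>k. Suc k < length R \<longrightarrow> k \<noteq> m \<longrightarrow>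
        0 < c k \<and> edge R' k = c k *\<^sub>R edge R k \<and> (c k < 1 \<longrightarrow> norm (edge R k) < l))"

text \<open>The assumptions on the tilted edge \<open>edge R m + w\<close> are those that hold for \<open>w = t *\<^sub>R z\<close> and all
  small \<open>t > 0\<close>.\<close>
locale inflection_tilt =
  fixes \<theta> l :: real and R R' :: "complex list" and m :: nat and w :: complex and c :: "nat \<Rightarrow> real"
  assumes dcc: "dcc \<theta> l R" and theta: "\<theta> \<le> pi / 2"
    and m: "1 \<le> m" "m + 2 < length R"
    and length_eq: "length R' = length R"
    and edge_tilted: "edge R' m = edge R m + w"
    and edge_scaled: "\<And>k. Suc k < length R \<Longrightarrow> k \<noteq> m \<Longrightarrow>
      0 < c k \<and> edge R' k = c k *\<^sub>R edge R k \<and> (c k < 1 \<longrightarrow> norm (edge R k) < l)"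
    and inflection: "same_side (edge R m) (edge R (m - 1)) (edge R (Suc m))"
    and side: "same_side (edge R m) (edge R (m - 1)) w"
    and tilted_nonzero: "edge R m + w \<noteq> 0"
    and signs_kept: "same_side (edge R (m - 1)) (edge R m + w) (edge R m)"
      "same_side (edge R (Suc m)) (edge R m + w) (edge R m)"
    and vangle_decreases: "\<And>j. Suc j < length R \<Longrightarrow> same_side (edge R m) (edge R j) w \<Longrightarrow>
      vangle (edge R j) (edge R m + w) \<le> vangle (edge R j) (edge R m)"
    and not_newly_short: "norm (edge R m) \<le> norm (edge R m + w) \<or>
      \<not> norm (edge R (m - 1)) < l \<and> \<not> norm (edge R (Suc m)) < l"
begin

lemma side_Suc: "same_side (edge R m) (edge R (Suc m)) w"
  using inflection side same_side_commute same_side_trans by blast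

lemma scale_pos: "Suc k < length R \<Longrightarrow> k \<noteq> m \<Longrightarrow> 0 < c k"
  and edge_R'_eq: "Suc k < length R \<Longrightarrow> k \<noteq> m \<Longrightarrow> edge R' k = c k *\<^sub>R edge R k"
  using edge_scaled by blast+

lemma edge_R'_nonzero: "Suc k < length R \<Longrightarrow> edge R' k \<noteq> 0"
  using tilted_nonzero edge_tilted edge_scaled[of k] dccD(2)[OF dcc, of k] by (cases "k = m") auto

lemma short_if_short_R':
  assumes "Suc k < length R" "k \<noteq> m" "norm (edge R' k) < l"
  shows "norm (edge R k) < l"
proof (cases "c k < 1")
  case True
  then show ?thesis
    using edge_scaled[OF assms(1,2)] by blast
next
  case False
  then have "norm (edge R k) \<le> c k * norm (edge R k)"
    by (simp add: mult_le_cancel_right1)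
  also have "\<dots> = norm (edge R' k)"
    using edge_scaled[OF assms(1,2)] by simp
  finally show ?thesis
    using assms(3) by simp
qed

lemma tilted_short_cases:
  assumes "norm (edge R' m) < l"
  shows "norm (edge R m) < l \<or> \<not> norm (edge R (m - 1)) < l \<and> \<not> norm (edge R (Suc m)) < l"
  using not_newly_short assms edge_tilted by auto

lemma vangle_R'_le: "Suc (Suc k) < length R \<Longrightarrow> vangle (edge R' k) (edge R' (Suc k)) \<le> \<theta>"
proof -
  assume k: "Suc (Suc k) < length R"
  consider "k = m" | "Suc k = m" | "k \<noteq> m" "Suc k \<noteq> m"
    by blast
  then show ?thesis
  proof cases
    case 1
    have "vangle (edge R' k) (edge R' (Suc k)) = vangle (edge R (Suc m)) (edge R m + w)"
      using 1 k edge_tilted edge_R'_eq[of "Suc m"] scale_pos[of "Suc m"]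
      by (simp add: vangle_scaleR_right vangle_commute)
    also have "\<dots> \<le> vangle (edge R (Suc m)) (edge R m)"
      using k 1 side_Suc by (intro vangle_decreases) auto
    also have "\<dots> \<le> \<theta>"
      using dccD(3)[OF dcc, of m] k 1 by (simp add: vangle_commute)
    finally show ?thesis .
  next
    case 2
    have "vangle (edge R' k) (edge R' (Suc k)) = vangle (edge R k) (edge R m + w)"
      using 2 k edge_tilted edge_R'_eq[of k] scale_pos[of k] by (simp add: vangle_scaleR_left)
    also have "\<dots> \<le> vangle (edge R k) (edge R m)"
      using k 2 side by (intro vangle_decreases) auto
    also have "\<dots> \<le> \<theta>"
      using dccD(3)[OF dcc, of k] k 2 by simp
    finally show ?thesis .
  next
    case 3
    then show ?thesis
      using k dccD(3)[OF dcc, of k] edge_R'_eq[of k] edge_R'_eq[of "Suc k"] scale_pos[of k]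
        scale_pos[of "Suc k"]
      by (simp add: vangle_scaleR_left vangle_scaleR_right)
  qed
qed

lemma no_short_pair_R':
  assumes k: "Suc (Suc k) < length R" and short: "norm (edge R' k) < l"
  shows "\<not> norm (edge R' (Suc k)) < l"
proof
  assume short_Suc: "norm (edge R' (Suc k)) < l"
  consider "k = m" | "Suc k = m" | "k \<noteq> m" "Suc k \<noteq> m"
    by blast
  then show False
  proof cases
    case 1
    then show False
      using short_if_short_R'[of "Suc k"] tilted_short_cases dccD(4)[OF dcc, of m] k short short_Suc
      by auto
  next
    case 2
    then show False
      using short_if_short_R'[of k] tilted_short_cases dccD(4)[OF dcc, of k] k short short_Suc
      by auto
  next
    case 3
    then show False
      using short_if_short_R'[of k] short_if_short_R'[of "Suc k"] dccD(4)[OF dcc, of k]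
        k short short_Suc by auto
  qed
qed

lemma inflection_R': "same_side (edge R' m) (edge R' (m - 1)) (edge R' (Suc m))"
proof -
  have "same_side (edge R m + w) (edge R (m - 1)) (edge R (Suc m))"
    using signs_kept inflection by (rule same_side_change_axis)
  moreover have "m - 1 \<noteq> m" "Suc (m - 1) < length R" "Suc m \<noteq> m" "Suc (Suc m) < length R"
    using m by auto
  ultimately show ?thesis
    using edge_tilted edge_R'_eq scale_pos same_side_scaleR[of 1 "c (m - 1)" "c (Suc m)"] by simp
qed

lemma short_neighbour_facts:
  assumes hj: "h = m - 1 \<and> j = m - 2 \<and> 2 \<le> m \<or> h = Suc m \<and> j = m + 2 \<and> m + 3 < length R"
    and short: "norm (edge R h) < l"
  shows "Suc j < length R" "Suc h < length R" "same_side (edge R h) (edge R m + w) (edge R m)"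
    "same_side (edge R m) (edge R h) w"
    "vangle (edge R m) (edge R h) \<le> \<theta>" "vangle (edge R h) (edge R j) \<le> \<theta>"
    "\<not> same_side (edge R h) (edge R j) (edge R m) \<Longrightarrow> vangle (edge R j) (edge R m) \<le> \<theta>"
  using hj
proof (atomize (full), elim disjE conjE, goal_cases)
  case 1
  moreover obtain q where "m = Suc (Suc q)"
    using 1 by (metis add_2_eq_Suc le_Suc_ex)
  ultimately show ?case
    using m signs_kept side short dccD(3)[OF dcc, of q] dccD(3)[OF dcc, of "Suc q"]
      dccD(5)[OF dcc, of q] by (simp add: vangle_commute)
next
  case 2
  then show ?case
    using m signs_kept side_Suc short dccD(3)[OF dcc, of m] dccD(3)[OF dcc, of "Suc m"]
      dccD(5)[OF dcc, of m] by (simp add: vangle_commute same_side_commute)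
qed

text \<open>Across a short neighbour \<open>h\<close> of edge \<open>m\<close>, the edge \<open>j\<close> beyond \<open>h\<close> lies on the side of \<open>w\<close>
  (non-inflection at \<open>h\<close> and all angles at most \<open>pi / 2\<close>), so the tilt decreases the angle between
  \<open>j\<close> and edge \<open>m\<close> as well.\<close>
lemma vangle_across_short_le:
  assumes hj: "h = m - 1 \<and> j = m - 2 \<and> 2 \<le> m \<or> h = Suc m \<and> j = m + 2 \<and> m + 3 < length R"
    and short: "norm (edge R h) < l"
    and no_inflection: "\<not> same_side (edge R h) (edge R j) (edge R m + w)"
  shows "vangle (edge R j) (edge R m + w) \<le> \<theta>"
proof -
  note facts = short_neighbour_facts[OF hj short]
  have no_inflection_R: "\<not> same_side (edge R h) (edge R j) (edge R m)"
    using no_inflection facts(3) same_side_commute same_side_trans by blast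
  then have turn_jm: "vangle (edge R j) (edge R m) \<le> \<theta>"
    by (rule facts(7))
  have "same_side (edge R m) (edge R h) (edge R j)"
  proof (rule same_side_of_non_inflection)
    show "edge R h \<noteq> 0" "edge R j \<noteq> 0"
      using dccD(2)[OF dcc] facts(1,2) by auto
    show "cross2 (edge R m) (edge R h) \<noteq> 0"
      using facts(4) by (auto simp: same_side_def)
    show "0 \<le> inner (edge R m) (edge R h)" "0 \<le> inner (edge R h) (edge R j)"
      "0 \<le> inner (edge R m) (edge R j)"
      using facts(5,6) turn_jm theta
      by (auto intro!: inner_nonneg_if_vangle_le_pi_half simp: vangle_commute[of "edge R m"])
    show "\<not> same_side (edge R h) (edge R m) (edge R j)"
      using no_inflection_R by (simp add: same_side_commute)
  qed
  then have "same_side (edge R m) (edge R j) w"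
    using facts(4) same_side_commute same_side_trans by blast
  then have "vangle (edge R j) (edge R m + w) \<le> vangle (edge R j) (edge R m)"
    by (rule vangle_decreases[OF facts(1)])
  with turn_jm show ?thesis
    by simp
qed

lemma vangle_across_short_R'_le:
  assumes k: "Suc (Suc (Suc k)) < length R" and short: "norm (edge R' (Suc k)) < l"
    and no_inflection: "\<not> same_side (edge R' (Suc k)) (edge R' k) (edge R' (Suc (Suc k)))"
  shows "vangle (edge R' k) (edge R' (Suc (Suc k))) \<le> \<theta>"
proof -
  consider "Suc k = m" | "Suc (Suc k) = m" | "k = m" | "k \<noteq> m" "Suc k \<noteq> m" "Suc (Suc k) \<noteq> m"
    by blast
  then show ?thesis
  proof cases
    case 1
    then have "k = m - 1"
      by simp
    then show ?thesis
      using inflection_R' no_inflection 1 by simp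
  next
    case 2
    have "\<not> same_side (edge R (m - 1)) (edge R (m - 2)) (edge R m + w)"
      using no_inflection 2 k edge_tilted edge_R'_eq scale_pos same_side_scaleR[of "c (Suc k)" "c k" 1]
      by auto
    moreover have "norm (edge R (m - 1)) < l"
      using short_if_short_R'[of "Suc k"] short 2 k by auto
    ultimately have "vangle (edge R (m - 2)) (edge R m + w) \<le> \<theta>"
      using 2 by (intro vangle_across_short_le) auto
    then show ?thesis
      using 2 k edge_tilted edge_R'_eq[of k] scale_pos[of k] by (auto simp: vangle_scaleR_left)
  next
    case 3
    have "\<not> same_side (edge R (Suc m)) (edge R m + w) (edge R (m + 2))"
      using no_inflection 3 k edge_tilted edge_R'_eq scale_pos
        same_side_scaleR[of "c (Suc k)" 1 "c (Suc (Suc k))"]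
      by auto
    then have "\<not> same_side (edge R (Suc m)) (edge R (m + 2)) (edge R m + w)"
      by (simp add: same_side_commute)
    moreover have "norm (edge R (Suc m)) < l"
      using short_if_short_R'[of "Suc k"] short 3 k by auto
    ultimately have "vangle (edge R (m + 2)) (edge R m + w) \<le> \<theta>"
      using 3 k by (intro vangle_across_short_le) auto
    then show ?thesis
      using 3 k edge_tilted edge_R'_eq[of "Suc (Suc k)"] scale_pos[of "Suc (Suc k)"]
      by (auto simp: vangle_scaleR_right vangle_commute)
  next
    case 4
    then have "\<not> same_side (edge R (Suc k)) (edge R k) (edge R (Suc (Suc k)))"
      using no_inflection k edge_R'_eq scale_pos same_side_scaleR by auto
    moreover have "norm (edge R (Suc k)) < l"
      using short_if_short_R'[of "Suc k"] short 4 k by auto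
    ultimately show ?thesis
      using 4 k dccD(5)[OF dcc, of k] edge_R'_eq scale_pos
      by (auto simp: vangle_scaleR_left vangle_scaleR_right)
  qed
qed

lemma dcc_R': "dcc \<theta> l R'"
  unfolding dcc_iff_edges length_eq
  using dccD(1)[OF dcc] edge_R'_nonzero vangle_R'_le no_short_pair_R' vangle_across_short_R'_le
  by blast

end

lemma eventually_perturbs_edge_dcc:
  assumes dcc: "dcc \<theta> l R" and theta: "\<theta> \<le> pi / 2" and m: "1 \<le> m" "m + 2 < length R"
    and inflection: "same_side (edge R m) (edge R (m - 1)) (edge R (Suc m))"
    and side: "same_side (edge R m) (edge R (m - 1)) z"
    and not_shorter: "0 \<le> inner (edge R m) z \<or> \<not> norm (edge R (m - 1)) < l \<and> \<not> norm (edge R (Suc m)) < l"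
  shows "\<forall>\<^sub>F t in at_right 0. \<forall>R'. perturbs_edge l m (t *\<^sub>R z) R R' \<longrightarrow> dcc \<theta> l R'"
proof -
  have nonzero: "edge R k \<noteq> 0" if "Suc k < length R" for k
    using dccD(2)[OF dcc that] .
  have "cross2 (edge R (m - 1)) (edge R m) \<noteq> 0" "cross2 (edge R (Suc m)) (edge R m) \<noteq> 0"
    using inflection by (auto simp: same_side_def cross2_commute[of "edge R m"])
  then have "\<forall>\<^sub>F t in at_right 0. same_side (edge R (m - 1)) (edge R m + t *\<^sub>R z) (edge R m) \<and>
      same_side (edge R (Suc m)) (edge R m + t *\<^sub>R z) (edge R m)"
    by (intro eventually_conj eventually_same_side_tilt)
  moreover have "\<forall>\<^sub>F t in at_right 0. edge R m + t *\<^sub>R z \<noteq> 0"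
    using m by (intro eventually_add_scaleR_nonzero nonzero) simp
  moreover have "\<forall>\<^sub>F t in at_right 0. \<forall>j \<in> {..<length R - 1}. same_side (edge R m) (edge R j) z \<longrightarrow>
      vangle (edge R j) (edge R m + t *\<^sub>R z) \<le> vangle (edge R j) (edge R m)"
    using m by (intro eventually_vangle_tilt_le_finite nonzero) auto
  moreover have "\<forall>\<^sub>F t in at_right 0. 0 < (t::real)"
    by (rule eventually_at_right_less)
  ultimately show ?thesis
  proof eventually_elim
    case (elim t)
    show ?case
    proof (intro allI impI)
      fix R'
      assume "perturbs_edge l m (t *\<^sub>R z) R R'"
      then obtain c where "length R' = length R" "edge R' m = edge R m + t *\<^sub>R z"
        "\<And>k. Suc k < length R \<Longrightarrow> k \<noteq> m \<Longrightarrow>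
          0 < c k \<and> edge R' k = c k *\<^sub>R edge R k \<and> (c k < 1 \<longrightarrow> norm (edge R k) < l)"
        unfolding perturbs_edge_def by blast
      moreover have "same_side x y (t *\<^sub>R z) \<longleftrightarrow> same_side x y z" for x y
        using same_side_scaleR[of 1 1 t] elim by simp
      moreover have "norm (edge R m) \<le> norm (edge R m + t *\<^sub>R z) \<or>
          \<not> norm (edge R (m - 1)) < l \<and> \<not> norm (edge R (Suc m)) < l"
        using not_shorter elim norm_le_norm_add_scaleR[of "edge R m" z t] by auto
      ultimately interpret inflection_tilt \<theta> l R R' m "t *\<^sub>R z" c
        using dcc theta m inflection side elim by unfold_locales auto
      show "dcc \<theta> l R'"
        by (rule dcc_R')
    qed
  qed
qed

lemma perturbs_edge_Cons:
  assumes "perturbs_edge l m w R R'" "R \<noteq> []" "hd R' = hd R"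
  shows "perturbs_edge l (Suc m) w (x # R) (x # R')"
proof -
  obtain c where len: "length R' = length R" and edge_m: "edge R' m = edge R m + w"
    and scaled: "\<And>k. Suc k < length R \<Longrightarrow> k \<noteq> m \<Longrightarrow>
      0 < c k \<and> edge R' k = c k *\<^sub>R edge R k \<and> (c k < 1 \<longrightarrow> norm (edge R k) < l)"
    using assms(1) unfolding perturbs_edge_def by blast
  have "edge (x # R') 0 = edge (x # R) 0"
    using assms(2,3) len by (cases R; cases R') (auto simp: edge_def)
  then show ?thesis
    unfolding perturbs_edge_def using len edge_m scaled
    by (intro conjI exI[of _ "case_nat 1 c"]) (auto split: nat.split)
qed

lemma perturbs_edge_append:
  assumes "perturbs_edge l m w R R'" "Suc m < length R" "last R' = last R"
  shows "perturbs_edge l m w (R @ [y]) (R' @ [y])"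
proof -
  obtain c where len: "length R' = length R" and edge_m: "edge R' m = edge R m + w"
    and scaled: "\<And>k. Suc k < length R \<Longrightarrow> k \<noteq> m \<Longrightarrow>
      0 < c k \<and> edge R' k = c k *\<^sub>R edge R k \<and> (c k < 1 \<longrightarrow> norm (edge R k) < l)"
    using assms(1) unfolding perturbs_edge_def by blast
  have last_edge: "edge (R' @ [y]) k = edge (R @ [y]) k" if "Suc k = length R" for k
  proof -
    have "R \<noteq> []" "R' \<noteq> []" "k = length R - 1"
      using that len by auto
    then show ?thesis
      using assms(3) len that by (simp add: edge_def nth_append last_conv_nth)
  qed
  show ?thesis
    unfolding perturbs_edge_def using len edge_m scaled assms(2)
    by (intro conjI exI[of _ "c(length R - 1 := 1)"])
      (auto simp: edge_append_singleton last_edge less_Suc_eq)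
qed

section \<open>Neighbours of inflection edges in Dubins paths\<close>

lemma shortcut_along_short_edge:
  assumes len: "length Q = length P" and mj: "Suc m < length P" "Suc j < length P" "j \<noteq> m"
    and short: "norm (edge P j) < l" and t: "0 < t" "t < 1"
    and cross: "cross2 (edge P m) (edge P j) \<noteq> 0"
    and edge_m: "edge Q m = edge P m + t *\<^sub>R edge P j"
    and edge_j: "edge Q j = (1 - t) *\<^sub>R edge P j"
    and edge_other: "\<And>k. Suc k < length P \<Longrightarrow> k \<noteq> m \<Longrightarrow> k \<noteq> j \<Longrightarrow> edge Q k = edge P k"
  shows "perturbs_edge l m (t *\<^sub>R edge P j) P Q" and "path_length Q < path_length P"
proof -
  show "perturbs_edge l m (t *\<^sub>R edge P j) P Q"
    unfolding perturbs_edge_def using len edge_m edge_j edge_other short t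
    by (intro conjI exI[of _ "\<lambda>k. if k = j then 1 - t else 1"]) auto
  have "norm (edge Q m) < norm (edge P m) + t * norm (edge P j)"
    using norm_add_less_if_cross2_nonzero[of "edge P m" "t *\<^sub>R edge P j"] cross t edge_m
    by (simp add: cross2_scaleR_right)
  moreover have "norm (edge Q j) = norm (edge P j) - t * norm (edge P j)"
    using edge_j t by (simp add: left_diff_distrib)
  ultimately have "(\<Sum>k\<in>{m, j}. norm (edge Q k) - norm (edge P k)) < 0"
    using mj by simp
  moreover have "(\<Sum>k<length P - 1. norm (edge Q k) - norm (edge P k)) =
      (\<Sum>k\<in>{m, j}. norm (edge Q k) - norm (edge P k))"
  proof (rule sum.mono_neutral_right)
    show "\<forall>k\<in>{..<length P - 1} - {m, j}. norm (edge Q k) - norm (edge P k) = 0"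
    proof
      fix k
      assume "k \<in> {..<length P - 1} - {m, j}"
      then show "norm (edge Q k) - norm (edge P k) = 0"
        using edge_other[of k] by auto
    qed
  qed (use mj in auto)
  ultimately show "path_length Q < path_length P"
    unfolding path_length_edges len by (simp add: sum_subtractf)
qed

text \<open>Such shortcuts stay curvature-constrained for small \<open>t\<close>, also with the pre- and post-edge
  attached, which contradicts minimality.\<close>
lemma dubins_no_perturbed_shortcut:
  assumes dubins: "dubins \<theta> l u U v V P" and theta: "\<theta> \<le> pi / 2"
    and m: "1 \<le> m" "m + 2 < length P"
    and inflection: "same_side (edge P m) (edge P (m - 1)) (edge P (Suc m))"
    and side: "same_side (edge P m) (edge P (m - 1)) z" and inner: "0 \<le> inner (edge P m) z"
    and shortcut: "\<And>t. 0 < t \<Longrightarrow> t < 1 \<Longrightarrow> perturbs_edge l m (t *\<^sub>R z) P (Q t) \<and>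
      hd (Q t) = hd P \<and> last (Q t) = last P \<and> path_length (Q t) < path_length P"
  shows False
proof -
  have dcc: "dcc \<theta> l P" and dcc_pre: "dcc \<theta> l ((u - U) # P)" and dcc_post: "dcc \<theta> l (P @ [v + V])"
    and P: "P \<noteq> []" "hd P = u" "last P = v"
    and minimal: "\<And>Q. dcc \<theta> l Q \<Longrightarrow> starts_at \<theta> l Q u U \<Longrightarrow> ends_at \<theta> l Q v V \<Longrightarrow>
      path_length P \<le> path_length Q"
    using dubins unfolding dubins_def starts_at_def ends_at_def by auto
  obtain p where p: "m = Suc p"
    using m by (cases m) auto
  have edge_post: "edge (P @ [v + V]) k = edge P k" if "k \<le> Suc m" for k
    using that m by (intro edge_append_singleton) simp
  have "\<forall>\<^sub>F t in at_right 0. (\<forall>R'. perturbs_edge l m (t *\<^sub>R z) P R' \<longrightarrow> dcc \<theta> l R') \<and>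
      (\<forall>R'. perturbs_edge l (Suc m) (t *\<^sub>R z) ((u - U) # P) R' \<longrightarrow> dcc \<theta> l R') \<and>
      (\<forall>R'. perturbs_edge l m (t *\<^sub>R z) (P @ [v + V]) R' \<longrightarrow> dcc \<theta> l R') \<and> 0 < t \<and> t < 1"
  proof (intro eventually_conj eventually_perturbs_edge_dcc dcc dcc_pre dcc_post)
    show "\<forall>\<^sub>F t in at_right 0. 0 < (t::real)"
      by (rule eventually_at_right_less)
    show "\<forall>\<^sub>F t in at_right 0. t < (1::real)"
      unfolding eventually_at_right_field by (auto intro!: exI[of _ 1])
  qed (use assms p in \<open>simp_all add: edge_post\<close>)
  then obtain t where dcc_Q: "\<And>R'. perturbs_edge l m (t *\<^sub>R z) P R' \<Longrightarrow> dcc \<theta> l R'"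
    and dcc_pre_Q: "\<And>R'. perturbs_edge l (Suc m) (t *\<^sub>R z) ((u - U) # P) R' \<Longrightarrow> dcc \<theta> l R'"
    and dcc_post_Q: "\<And>R'. perturbs_edge l m (t *\<^sub>R z) (P @ [v + V]) R' \<Longrightarrow> dcc \<theta> l R'"
    and t: "0 < t" "t < 1"
    using eventually_happens'[OF trivial_limit_at_right_real] by blast
  have Q: "perturbs_edge l m (t *\<^sub>R z) P (Q t)" "hd (Q t) = hd P" "last (Q t) = last P"
    "path_length (Q t) < path_length P"
    using shortcut[OF t] by auto
  have "Q t \<noteq> []"
    using Q(1) P(1) unfolding perturbs_edge_def by auto
  have "path_length P \<le> path_length (Q t)"
  proof (rule minimal)
    show "dcc \<theta> l (Q t)"
      using Q(1) by (rule dcc_Q)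
    show "starts_at \<theta> l (Q t) u U"
      unfolding starts_at_def using \<open>Q t \<noteq> []\<close> Q P
      by (auto intro!: dcc_pre_Q perturbs_edge_Cons)
    show "ends_at \<theta> l (Q t) v V"
      unfolding ends_at_def using \<open>Q t \<noteq> []\<close> Q P m
      by (auto intro!: dcc_post_Q perturbs_edge_append)
  qed
  with Q show False
    by simp
qed

lemma dubins_inflection_neighbour_not_short:
  assumes dubins: "dubins \<theta> l u U v V P" and theta: "\<theta> \<le> pi / 2"
    and m: "1 \<le> m" "m + 2 < length P"
    and inflection: "same_side (edge P m) (edge P (m - 1)) (edge P (Suc m))"
    and j: "j = m - 1 \<or> j = Suc m"
  shows "\<not> norm (edge P j) < l"
proof
  assume short: "norm (edge P j) < l"
  have dcc: "dcc \<theta> l P"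
    using dubins by (simp add: dubins_def)
  have "cross2 (edge P m) (edge P (m - 1)) \<noteq> 0"
    using inflection by (auto simp: same_side_def)
  with j inflection have side: "same_side (edge P m) (edge P (m - 1)) (edge P j)"
    by (auto simp: same_side_self)
  then have cross: "cross2 (edge P m) (edge P j) \<noteq> 0"
    by (auto simp: same_side_def)
  have inner: "0 \<le> inner (edge P m) (edge P j)"
    using j m theta dccD(3)[OF dcc, of "m - 1"] dccD(3)[OF dcc, of m]
    by (auto intro!: inner_nonneg_if_vangle_le_pi_half simp: vangle_commute[of "edge P m"])
  text \<open>Slide the vertex shared by edges \<open>m\<close> and \<open>j\<close> back along the short edge \<open>j\<close>.\<close>
  define k where "k = (if j = m - 1 then m else Suc m)"
  define d where "d = (if j = m - 1 then - edge P j else edge P j)"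
  define Q where "Q t = P[k := P ! k + t *\<^sub>R d]" for t
  have k: "0 < k" "k < length P - 1" "P \<noteq> []" and jm: "j \<noteq> m" "Suc j < length P"
    using j m by (auto simp: k_def)
  have edge_update: "edge (Q t) i =
      (if i = k then edge P i - t *\<^sub>R d else if Suc i = k then edge P i + t *\<^sub>R d else edge P i)"
    if "Suc i < length P" for t i
    unfolding Q_def using that by (rule edge_list_update_add)
  have edge_Q: "edge (Q t) m = edge P m + t *\<^sub>R edge P j" "edge (Q t) j = (1 - t) *\<^sub>R edge P j"
    "\<And>i. Suc i < length P \<Longrightarrow> i \<noteq> m \<Longrightarrow> i \<noteq> j \<Longrightarrow> edge (Q t) i = edge P i" for t
    using j m edge_update by (auto simp: k_def d_def algebra_simps)
  show False
  proof (rule dubins_no_perturbed_shortcut[OF dubins theta m inflection side inner])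
    fix t :: real
    assume t: "0 < t" "t < 1"
    have "length (Q t) = length P" "hd (Q t) = hd P" "last (Q t) = last P"
      using k by (auto simp: Q_def hd_conv_nth last_conv_nth nth_list_update)
    then show "perturbs_edge l m (t *\<^sub>R edge P j) P (Q t) \<and> hd (Q t) = hd P \<and>
        last (Q t) = last P \<and> path_length (Q t) < path_length P"
      using shortcut_along_short_edge[OF _ _ jm(2) jm(1) short t cross edge_Q] m by auto
  qed
qed

lemma perturbs_edge_translate_from:
  "Suc i < length P \<Longrightarrow> perturbs_edge l i X P (translate_from P i X)"
  unfolding perturbs_edge_def
  by (intro conjI exI[of _ "\<lambda>_. 1"]) (auto simp: length_translate_from edge_translate_from)

theorem lemma3:
  fixes \<theta> l :: real and u U v V T :: complex and P :: "complex list" and i :: nat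
  assumes "0 \<le> \<theta>" "\<theta> \<le> pi / 2" "2 * pi / \<theta> \<in> \<int>" "l > 0"
    and "dubins \<theta> l u U v V P"
    and "nonzero_turns P"
    and "1 \<le> i" "i + 2 < length P"
    and "inflection (P ! (i - 1)) (P ! i) (P ! (i + 1)) (P ! (i + 2))"
    and "admissible (P ! i) (P ! (i + 1)) (P ! (i + 2)) T"
  shows "\<exists>\<epsilon>>0. dcc \<theta> l (translate_from P i (\<epsilon> *\<^sub>R T))"
proof -
  have dcc: "dcc \<theta> l P"
    using assms(5) by (simp add: dubins_def)
  have inflection: "same_side (edge P i) (edge P (i - 1)) (edge P (Suc i))"
    using assms(7,9) by (simp add: inflection_iff_same_side edge_def numeral_2_eq_2)
  moreover have "same_side (edge P i) T (edge P (Suc i))"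
    using assms(10) by (simp add: admissible_iff_same_side edge_def numeral_2_eq_2)
  ultimately have side: "same_side (edge P i) (edge P (i - 1)) T"
    using same_side_commute same_side_trans by blast
  have "\<not> norm (edge P (i - 1)) < l" "\<not> norm (edge P (Suc i)) < l"
    using dubins_inflection_neighbour_not_short[OF assms(5,2,7,8) inflection] by blast+
  then have "\<forall>\<^sub>F t in at_right 0. (\<forall>R'. perturbs_edge l i (t *\<^sub>R T) P R' \<longrightarrow> dcc \<theta> l R') \<and> 0 < t"
    using dcc assms(2,7,8) inflection side
    by (intro eventually_conj eventually_perturbs_edge_dcc eventually_at_right_less) auto
  then obtain \<epsilon> where "0 < \<epsilon>" "\<And>R'. perturbs_edge l i (\<epsilon> *\<^sub>R T) P R' \<Longrightarrow> dcc \<theta> l R'"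
    using eventually_happens'[OF trivial_limit_at_right_real] by blast
  moreover have "perturbs_edge l i (\<epsilon> *\<^sub>R T) P (translate_from P i (\<epsilon> *\<^sub>R T))"
    using assms(8) by (intro perturbs_edge_translate_from) simp
  ultimately show ?thesis
    by blast
qed

end
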